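(* Let $P$ be a connected shrub on a finite set $I$ with at least two elements, and let $a\neq a'$ be two vertices of height $0$ in $P$. Then there exists a vertex $b$ covering both $a$ and $a'$.
   Context: A shrub $P$ on a finite set $I$ is a set $E$ of edges (unordered pairs $\{i,j\}$ of distinct elements of $I$) together with a height function $h_P:I\to\mathbb{N}$. Say that $j$ covers $i$ if $\{i,j\}\in E$ and $h_P(j)=h_P(i)+1$. The axioms are: (1) if $\{i,j\}\in E$ then $h_P(i)=h_P(j)\pm 1$; (2) if $h_P(j)>0$ then there is an edge $\{i,j\}$ with $h_P(i)=h_P(j)-1$; (3) there are no four distinct vertices $a,b,c,d$ such that $a$ covers $b$ and $c$, $c$ covers $d$, and $\{b,d\}\notin E$; (4) there are no five distinct vertices $a,b,c,d,e$ such that $a$ covers $c$ and $d$, $b$ covers $d$ and $e$, $\{a,e\}\notin E$ and $\{b,c\}\notin E$. A shrub is connected if its underlying graph $(I,E)$ is connected. *)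

theory Defs
  imports Main
begin

definition covers :: "'a set set \<Rightarrow> ('a \<Rightarrow> nat) \<Rightarrow> 'a \<Rightarrow> 'a \<Rightarrow> bool" where
  "covers E h j i \<longleftrightarrow> {i, j} \<in> E \<and> h j = h i + 1"

definition shrub :: "'a set \<Rightarrow> 'a set set \<Rightarrow> ('a \<Rightarrow> nat) \<Rightarrow> bool" where
  "shrub I E h \<longleftrightarrow>
     finite I \<and>
     E \<subseteq> {{i, j} | i j. i \<in> I \<and> j \<in> I \<and> i \<noteq> j} \<and>
     (\<forall>i j. {i, j} \<in> E \<longrightarrow> h i = h j + 1 \<or> h j = h i + 1) \<and>
     (\<forall>j\<in>I. h j > 0 \<longrightarrow> (\<exists>i. {i, j} \<in> E \<and> h i + 1 = h j)) \<and>
     \<not> (\<exists>a b c d. a \<in> I \<and> b \<in> I \<and> c \<in> I \<and> d \<in> I \<and> distinct [a, b, c, d] \<and>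
          covers E h a b \<and> covers E h a c \<and> covers E h c d \<and> {b, d} \<notin> E) \<and>
     \<not> (\<exists>a b c d e. a \<in> I \<and> b \<in> I \<and> c \<in> I \<and> d \<in> I \<and> e \<in> I \<and>
          distinct [a, b, c, d, e] \<and>
          covers E h a c \<and> covers E h a d \<and> covers E h b d \<and> covers E h b e \<and>
          {a, e} \<notin> E \<and> {b, c} \<notin> E)"

definition shrub_connected :: "'a set \<Rightarrow> 'a set set \<Rightarrow> bool" where
  "shrub_connected I E \<longleftrightarrow>
     (\<forall>i\<in>I. \<forall>j\<in>I. (i, j) \<in> {(x, y). {x, y} \<in> E}\<^sup>*)"

end

theory Submission
  imports Defs
begin

text \<open>Call two vertices of height 0 siblings if they are equal or have a common cover. By
axiom (4) this is transitive on minimal vertices, and by axiom (3) and induction on the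
height, all minimal vertices below a given vertex are pairwise siblings. Walking along a
path from \<open>a\<close> to \<open>a'\<close>, each vertex keeps all minimal vertices below it siblings of \<open>a\<close>:
going down an edge only shrinks that set, while going up an edge adds vertices which are
siblings of a minimal vertex already below the previous vertex.\<close>

locale shrub_on =
  fixes I :: "'a set" and E :: "'a set set" and h :: "'a \<Rightarrow> nat"
  assumes shrub: "shrub I E h"
begin

definition below :: "('a \<times> 'a) set" where
  "below = {(u, w). covers E h u w}"

definition siblings :: "'a \<Rightarrow> 'a \<Rightarrow> bool" where
  "siblings x y \<longleftrightarrow> x = y \<or> (\<exists>b. covers E h b x \<and> covers E h b y)"

lemma siblings_sym: "siblings x y \<Longrightarrow> siblings y x"
  unfolding siblings_def by blast

lemma edge_in_carrier:
  assumes "{i, j} \<in> E"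
  shows "i \<in> I \<and> j \<in> I \<and> i \<noteq> j"
proof -
  obtain p q where "{i, j} = {p, q}" "p \<in> I" "q \<in> I" "p \<noteq> q"
    using assms shrub unfolding shrub_def by blast
  then show ?thesis by (metis doubleton_eq_iff insert_absorb2 singleton_insert_inj_eq)
qed

lemma covers_in_carrier: "covers E h b x \<Longrightarrow> b \<in> I \<and> x \<in> I"
  unfolding covers_def using edge_in_carrier by blast

lemma edge_covers: "{u, w} \<in> E \<Longrightarrow> covers E h u w \<or> covers E h w u"
  using shrub unfolding shrub_def covers_def by (metis insert_commute)

lemma exists_lower_cover:
  assumes "c \<in> I" "h c > 0"
  shows "\<exists>d. covers E h c d"
  using assms shrub unfolding shrub_def covers_def by (metis insert_commute)

lemma edge_of_cover_chain:
  assumes "a \<in> I" "b \<in> I" "c \<in> I" "d \<in> I" "distinct [a, b, c, d]"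
    and "covers E h a b" "covers E h a c" "covers E h c d"
  shows "{b, d} \<in> E"
  using shrub assms unfolding shrub_def by blast

lemma edge_of_cover_zigzag:
  assumes "a \<in> I" "b \<in> I" "c \<in> I" "d \<in> I" "e \<in> I" "distinct [a, b, c, d, e]"
    and "covers E h a c" "covers E h a d" "covers E h b d" "covers E h b e"
  shows "{a, e} \<in> E \<or> {b, c} \<in> E"
  using shrub assms unfolding shrub_def by blast

lemma below_rtrancl_minimal: "(u, w) \<in> below\<^sup>* \<Longrightarrow> h u = 0 \<Longrightarrow> w = u"
  by (induction rule: converse_rtrancl_induct) (auto simp: below_def covers_def)

lemma below_rtrancl_first_step:
  assumes "(v, x) \<in> below\<^sup>*" "v \<noteq> x"
  shows "\<exists>c. covers E h v c \<and> (c, x) \<in> below\<^sup>*"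
  using assms by (induction rule: converse_rtrancl_induct) (auto simp: below_def)

lemma exists_minimal_below: "v \<in> I \<Longrightarrow> \<exists>x. h x = 0 \<and> (v, x) \<in> below\<^sup>*"
proof (induction "h v" arbitrary: v)
  case 0
  then show ?case by auto
next
  case (Suc n)
  then obtain d where d: "covers E h v d" using exists_lower_cover by fastforce
  then have "d \<in> I" "h d = n" using Suc.hyps covers_in_carrier unfolding covers_def by auto
  then obtain x where "h x = 0" "(d, x) \<in> below\<^sup>*" using Suc.hyps by blast
  moreover have "(v, d) \<in> below" using d unfolding below_def by simp
  ultimately show ?case by (meson converse_rtrancl_into_rtrancl)
qed

lemma siblings_trans:
  assumes "h x = 0" "h y = 0" "h z = 0" and "siblings x y" "siblings y z"
  shows "siblings x z"
proof (cases "x = y \<or> y = z \<or> x = z")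
  case True
  then show ?thesis using assms unfolding siblings_def by auto
next
  case distinct_xyz: False
  then obtain b b' where b: "covers E h b x" "covers E h b y"
    and b': "covers E h b' y" "covers E h b' z"
    using assms unfolding siblings_def by auto
  show ?thesis
  proof (cases "b = b'")
    case True
    then show ?thesis using b b' unfolding siblings_def by auto
  next
    case False
    have "h b = 1" "h b' = 1" using b b' assms unfolding covers_def by auto
    then have "distinct [b, b', x, y, z]" using False distinct_xyz assms by auto
    then have "{b, z} \<in> E \<or> {b', x} \<in> E"
      using edge_of_cover_zigzag b b' covers_in_carrier by metis
    then have "covers E h b z \<or> covers E h b' x"
      using \<open>h b = 1\<close> \<open>h b' = 1\<close> assms unfolding covers_def by (auto simp: insert_commute)
    then show ?thesis using b b' unfolding siblings_def by auto
  qed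
qed

lemma lower_covers_common_lower_cover:
  assumes "covers E h v c\<^sub>1" "covers E h v c\<^sub>2" "h c\<^sub>2 > 0"
  shows "\<exists>d. covers E h c\<^sub>1 d \<and> covers E h c\<^sub>2 d"
proof (cases "c\<^sub>1 = c\<^sub>2")
  case True
  then show ?thesis using assms exists_lower_cover covers_in_carrier by blast
next
  case False
  obtain d where d: "covers E h c\<^sub>2 d" using assms exists_lower_cover covers_in_carrier by blast
  have "h c\<^sub>1 = h c\<^sub>2" "h d + 1 = h c\<^sub>2" using assms d unfolding covers_def by auto
  then have "distinct [v, c\<^sub>1, c\<^sub>2, d]" using False assms(1) unfolding covers_def by auto
  then have "{c\<^sub>1, d} \<in> E" using edge_of_cover_chain assms d covers_in_carrier by metis
  then have "covers E h c\<^sub>1 d"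
    using \<open>h c\<^sub>1 = h c\<^sub>2\<close> \<open>h d + 1 = h c\<^sub>2\<close> unfolding covers_def by (auto simp: insert_commute)
  then show ?thesis using d by blast
qed

lemma minimal_below_siblings:
  assumes "(v, x) \<in> below\<^sup>*" "(v, y) \<in> below\<^sup>*" "h x = 0" "h y = 0"
  shows "siblings x y"
  using assms
proof (induction "h v" arbitrary: v x y)
  case 0
  then have "x = v" "y = v" using below_rtrancl_minimal by auto
  then show ?case by (simp add: siblings_def)
next
  case (Suc m)
  have "v \<noteq> x" "v \<noteq> y" using Suc.hyps Suc.prems by auto
  obtain c\<^sub>1 where c\<^sub>1: "covers E h v c\<^sub>1" "(c\<^sub>1, x) \<in> below\<^sup>*"
    using below_rtrancl_first_step Suc.prems(1) \<open>v \<noteq> x\<close> by blast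
  obtain c\<^sub>2 where c\<^sub>2: "covers E h v c\<^sub>2" "(c\<^sub>2, y) \<in> below\<^sup>*"
    using below_rtrancl_first_step Suc.prems(2) \<open>v \<noteq> y\<close> by blast
  have h_c: "h c\<^sub>1 = m" "h c\<^sub>2 = m"
    using c\<^sub>1 c\<^sub>2 Suc.hyps unfolding covers_def by auto
  show ?case
  proof (cases "m = 0")
    case True
    then have "c\<^sub>1 = x" "c\<^sub>2 = y" using c\<^sub>1 c\<^sub>2 h_c below_rtrancl_minimal by auto
    then show ?thesis using c\<^sub>1 c\<^sub>2 unfolding siblings_def by auto
  next
    case False
    then obtain d where d: "covers E h c\<^sub>1 d" "covers E h c\<^sub>2 d"
      using lower_covers_common_lower_cover c\<^sub>1 c\<^sub>2 h_c by blast
    obtain z where z: "h z = 0" "(d, z) \<in> below\<^sup>*"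
      using exists_minimal_below d covers_in_carrier by blast
    have "(c\<^sub>1, d) \<in> below" "(c\<^sub>2, d) \<in> below" using d unfolding below_def by simp_all
    then have "(c\<^sub>1, z) \<in> below\<^sup>*" "(c\<^sub>2, z) \<in> below\<^sup>*"
      using z(2) by (simp_all add: converse_rtrancl_into_rtrancl)
    then have "siblings x z" "siblings y z"
      using Suc.hyps(1)[of c\<^sub>1 x z] Suc.hyps(1)[of c\<^sub>2 y z] h_c c\<^sub>1(2) c\<^sub>2(2) z(1) Suc.prems(3,4)
      by simp_all
    then show ?thesis using siblings_trans Suc.prems(3,4) z(1) siblings_sym by blast
  qed
qed

lemma path_minimal_below_siblings:
  assumes "(a, w) \<in> {(x, y). {x, y} \<in> E}\<^sup>*" "a \<in> I" "h a = 0"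
  shows "w \<in> I \<and> (\<forall>z. (w, z) \<in> below\<^sup>* \<longrightarrow> h z = 0 \<longrightarrow> siblings a z)"
  using assms(1)
proof (induction rule: rtrancl_induct)
  case base
  then show ?case using assms(2,3) below_rtrancl_minimal by (auto simp: siblings_def)
next
  case (step w u)
  then have edge: "{w, u} \<in> E" and w_in: "w \<in> I"
    and IH: "\<And>z. (w, z) \<in> below\<^sup>* \<Longrightarrow> h z = 0 \<Longrightarrow> siblings a z" by auto
  have u_in: "u \<in> I" using edge edge_in_carrier by blast
  from edge_covers[OF edge] show ?case
  proof
    assume "covers E h w u"
    then have "(w, u) \<in> below" unfolding below_def by simp
    then show ?case using IH u_in by (meson converse_rtrancl_into_rtrancl)
  next
    assume "covers E h u w"
    then have "(u, w) \<in> below" unfolding below_def by simp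
    obtain z\<^sub>0 where z\<^sub>0: "h z\<^sub>0 = 0" "(w, z\<^sub>0) \<in> below\<^sup>*"
      using exists_minimal_below w_in by blast
    have "(u, z\<^sub>0) \<in> below\<^sup>*" using \<open>(u, w) \<in> below\<close> z\<^sub>0 by (meson converse_rtrancl_into_rtrancl)
    have "siblings a z" if "(u, z) \<in> below\<^sup>*" "h z = 0" for z
    proof -
      have "siblings z\<^sub>0 z"
        using minimal_below_siblings \<open>(u, z\<^sub>0) \<in> below\<^sup>*\<close> that z\<^sub>0 by blast
      then show ?thesis using siblings_trans IH z\<^sub>0 assms(3) that(2) by blast
    qed
    then show ?case using u_in by blast
  qed
qed

end

theorem mainTheorem4:
  fixes I :: "'a set" and E :: "'a set set" and h :: "'a \<Rightarrow> nat"
  assumes "shrub I E h"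
    and "shrub_connected I E"
    and "card I \<ge> 2"
    and "a \<in> I" and "a' \<in> I" and "a \<noteq> a'"
    and "h a = 0" and "h a' = 0"
  shows "\<exists>b\<in>I. covers E h b a \<and> covers E h b a'"
proof -
  interpret shrub_on I E h by standard (fact assms(1))
  have "(a, a') \<in> {(x, y). {x, y} \<in> E}\<^sup>*"
    using assms unfolding shrub_connected_def by blast
  then have "siblings a a'"
    using path_minimal_below_siblings assms(4,7,8) by blast
  then show ?thesis
    using assms(6) covers_in_carrier unfolding siblings_def by blast
qed

end
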